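(* Let $w_1,w_2,w_3>0$ and let $D$ be the real symmetric $4\times4$ matrix with $D_{i,i+1}=D_{i+1,i}=w_i^{-1}$ for $i=1,2,3$ and all other entries $0$. Let $\lambda=d^D(1,4)$. If $w_2>\sqrt{w_1w_3}$ then $$\lambda=\frac{\sqrt{w_1^2+w_2^2}\,\sqrt{w_3^2+w_2^2}}{w_2},$$ and if $w_2\le\sqrt{w_1w_3}$ then $\lambda=w_1+w_3$.
   Context: For a self-adjoint $n\times n$ matrix $M$, $d^M(i,j)=\sup\{|a(i)-a(j)| : a\in\mathbb{C}^n,\ \|[M,\pi(a)]\|\le 1\}$, where $\pi(a)=\mathrm{diag}(a(1),\dots,a(n))$ and $\|\cdot\|$ is the operator norm. *)

theory Defs
  imports "HOL-Analysis.Analysis" "HOL-Library.Numeral_Type"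
begin

definition diag_mat :: "complex ^ 'n \<Rightarrow> complex ^ 'n ^ 'n" where
  "diag_mat a = (\<chi> i j. if i = j then a $ i else 0)"

definition op_norm :: "complex ^ 'n ^ 'n \<Rightarrow> real" where
  "op_norm A = onorm (\<lambda>x. A *v x)"

definition commutator :: "complex ^ 'n ^ 'n \<Rightarrow> complex ^ 'n ^ 'n \<Rightarrow> complex ^ 'n ^ 'n" where
  "commutator A B = A ** B - B ** A"

definition connes_dist :: "complex ^ 'n ^ 'n \<Rightarrow> 'n \<Rightarrow> 'n \<Rightarrow> real" where
  "connes_dist M i j =
     Sup {cmod (a $ i - a $ j) | a. op_norm (commutator M (diag_mat a)) \<le> 1}"

(* The 4x4 tridiagonal matrix D; index type 4 has elements 0,1,2,3 which
   correspond to the paper's indices 1,2,3,4 *)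
definition D4 :: "real \<Rightarrow> real \<Rightarrow> real \<Rightarrow> complex ^ 4 ^ 4" where
  "D4 w1 w2 w3 = (\<chi> i j.
      if {i, j} = {0, 1} then complex_of_real (1 / w1)
      else if {i, j} = {1, 2} then complex_of_real (1 / w2)
      else if {i, j} = {2, 3} then complex_of_real (1 / w3)
      else 0)"

end

theory Submission
  imports Defs
begin

(* Write C = [D, pi(a)]; its only nonzero entries are C(i,i+1) = -C(i+1,i) = (a(i+1) - a(i)) / w_i.
   Upper bounds: when ||C|| <= 1, every pairing sum_i v(i) (C u)(i) is at most |v| |u|, and suitable
   real test vectors u, v make this pairing telescope to a multiple of a(4) - a(1).
   Lower bounds: for real increments w1 p, w2 q, w3 r of a, C is the real antisymmetric tridiagonal
   matrix with entries p, q, r, and ||C|| <= 1 as soon as p^2, r^2 <= 1 and q^2 <= (1 - p^2)(1 - r^2),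
   since |u|^2 - |C u|^2 then splits into two nonnegative quadratic forms. Maximising w1 p + w2 q + w3 r
   under these constraints gives the two formulas: the corner (p, q, r) = (1, 0, 1) when
   w2^2 <= w1 w3, and otherwise a point where the last constraint is active. *)

abbreviation connes_lipschitz :: "complex ^ 'n ^ 'n \<Rightarrow> complex ^ 'n \<Rightarrow> bool" where
  "connes_lipschitz M a \<equiv> op_norm (commutator M (diag_mat a)) \<le> 1"

lemma connes_dist_eqI:
  assumes bound: "\<And>a. connes_lipschitz M a \<Longrightarrow> cmod (a $ i - a $ j) \<le> L"
    and attained: "connes_lipschitz M b" "cmod (b $ i - b $ j) = L"
  shows "connes_dist M i j = L"
  unfolding connes_dist_def
proof (rule cSup_eq_maximum)
  show "L \<in> {cmod (a $ i - a $ j) |a. connes_lipschitz M a}"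
    using attained by blast
qed (use bound in blast)

lemma norm_mult_vec_le_op_norm: "norm (M *v u) \<le> op_norm M * norm (u :: complex ^ 'n)"
  unfolding op_norm_def by (rule onorm) simp

lemma cmod_pairing_le: "cmod (\<Sum>i\<in>UNIV. v $ i * u $ i) \<le> norm (v :: complex ^ 'n) * norm u"
proof -
  have "cmod (\<Sum>i\<in>UNIV. v $ i * u $ i) \<le> (\<Sum>i\<in>UNIV. \<bar>cmod (v $ i)\<bar> * \<bar>cmod (u $ i)\<bar>)"
    using norm_sum[of "\<lambda>i. v $ i * u $ i"] by (simp add: norm_mult)
  also have "\<dots> \<le> L2_set (\<lambda>i. cmod (v $ i)) UNIV * L2_set (\<lambda>i. cmod (u $ i)) UNIV"
    by (rule L2_set_mult_ineq)
  finally show ?thesis by (simp add: norm_vec_def)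
qed

lemma cmod_pairing_mult_vec_le:
  assumes "op_norm M \<le> 1"
  shows "cmod (\<Sum>i\<in>UNIV. v $ i * (M *v u) $ i) \<le> norm (v :: complex ^ 'n) * norm u"
proof -
  have "norm (M *v u) \<le> norm u"
    using norm_mult_vec_le_op_norm[of M u] assms mult_right_mono[of "op_norm M" 1 "norm u"] by simp
  then show ?thesis
    using cmod_pairing_le[of v "M *v u"] by (meson mult_left_mono norm_ge_zero order_trans)
qed

lemma commutator_diag_mat_nth:
  "commutator M (diag_mat a) $ i $ j = M $ i $ j * (a $ j - a $ i)"
proof -
  have "(M ** diag_mat a) $ i $ j = M $ i $ j * a $ j"
    "(diag_mat a ** M) $ i $ j = a $ i * M $ i $ j"
    unfolding matrix_matrix_mult_def diag_mat_def by (simp_all add: if_distrib if_distribR cong: if_cong)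
  then show ?thesis by (simp add: commutator_def algebra_simps)
qed

lemma sum_UNIV_4: "sum f (UNIV :: 4 set) = f 0 + f 1 + f 2 + f 3"
proof -
  have four: "(4 :: 4) = 0" by simp
  show ?thesis unfolding sum_4 four by (simp add: ac_simps)
qed

definition vec4 :: "'a \<Rightarrow> 'a \<Rightarrow> 'a \<Rightarrow> 'a \<Rightarrow> 'a ^ 4" where
  "vec4 x0 x1 x2 x3 = (\<chi> i. if i = 0 then x0 else if i = 1 then x1 else if i = 2 then x2 else x3)"

lemma vec4_nth [simp]:
  "vec4 x0 x1 x2 x3 $ 0 = x0" "vec4 x0 x1 x2 x3 $ 1 = x1"
  "vec4 x0 x1 x2 x3 $ 2 = x2" "vec4 x0 x1 x2 x3 $ 3 = x3"
  by (simp_all add: vec4_def)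

lemma norm_vec4_power2:
  "norm (x :: complex ^ 4) ^ 2 = cmod (x $ 0)^2 + cmod (x $ 1)^2 + cmod (x $ 2)^2 + cmod (x $ 3)^2"
  unfolding norm_vec_def L2_set_def sum_UNIV_4 by (simp add: add_nonneg_nonneg)

lemma norm_vec4:
  "norm (x :: complex ^ 4) = sqrt (cmod (x $ 0)^2 + cmod (x $ 1)^2 + cmod (x $ 2)^2 + cmod (x $ 3)^2)"
  unfolding norm_vec_def L2_set_def sum_UNIV_4 by simp

lemma D4_commutator_mult_vec:
  fixes a u :: "complex ^ 4" and w1 w2 w3 :: real
  defines "C \<equiv> commutator (D4 w1 w2 w3) (diag_mat a)"
  shows "(C *v u) $ 0 = of_real (1/w1) * (a $ 1 - a $ 0) * u $ 1"
    "(C *v u) $ 1 = - of_real (1/w1) * (a $ 1 - a $ 0) * u $ 0 + of_real (1/w2) * (a $ 2 - a $ 1) * u $ 2"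
    "(C *v u) $ 2 = - of_real (1/w2) * (a $ 2 - a $ 1) * u $ 1 + of_real (1/w3) * (a $ 3 - a $ 2) * u $ 3"
    "(C *v u) $ 3 = - of_real (1/w3) * (a $ 3 - a $ 2) * u $ 2"
  unfolding C_def matrix_vector_mult_def commutator_diag_mat_nth D4_def sum_UNIV_4
  by (simp_all add: insert_commute doubleton_eq_iff algebra_simps)

lemma connes_lipschitz_D4_cmod_le_sqrt:
  fixes a :: "complex ^ 4" and w1 w2 w3 :: real
  assumes "w1 > 0" "w2 > 0" "w3 > 0" and lip: "connes_lipschitz (D4 w1 w2 w3) a"
  shows "cmod (a $ 3 - a $ 0) \<le> sqrt (w1\<^sup>2 + w2\<^sup>2) * sqrt (w3\<^sup>2 + w2\<^sup>2) / w2"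
proof -
  let ?C = "commutator (D4 w1 w2 w3) (diag_mat a)"
  define u :: "complex ^ 4" where "u = vec4 (of_real w1) 0 (- of_real w2) 0"
  define v :: "complex ^ 4" where "v = vec4 0 (- of_real w2) 0 (of_real w3)"
  have telescope: "(\<Sum>i\<in>UNIV. v $ i * (?C *v u) $ i) = of_real w2 * (a $ 3 - a $ 0)"
    unfolding sum_UNIV_4 D4_commutator_mult_vec u_def v_def using assms by (simp add: algebra_simps)
  have "w2 * cmod (a $ 3 - a $ 0) \<le> norm v * norm u"
    using cmod_pairing_mult_vec_le[OF lip, of v u] assms by (simp add: telescope norm_mult)
  also have "norm v * norm u = sqrt (w3\<^sup>2 + w2\<^sup>2) * sqrt (w1\<^sup>2 + w2\<^sup>2)"
    unfolding norm_vec4 u_def v_def by simp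
  finally show ?thesis using assms by (simp add: field_simps)
qed

lemma connes_lipschitz_D4_cmod_le_add:
  fixes a :: "complex ^ 4" and w1 w2 w3 :: real
  assumes "w1 > 0" "w2 > 0" "w3 > 0" and "w2\<^sup>2 \<le> w1 * w3"
    and lip: "connes_lipschitz (D4 w1 w2 w3) a"
  shows "cmod (a $ 3 - a $ 0) \<le> w1 + w3"
proof -
  let ?C = "commutator (D4 w1 w2 w3) (diag_mat a)"
  define u :: "complex ^ 4" where "u = vec4 (of_real w1) 0 (- of_real w2) 0"
  define v :: "complex ^ 4" where "v = vec4 0 (- of_real w1) 0 (of_real w2)"
  define u' :: "complex ^ 4" where "u' = vec4 0 0 1 0"
  define c where "c = w1 * w3 - w2\<^sup>2"
  define v' :: "complex ^ 4" where "v' = vec4 0 0 0 (- of_real c)"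
  define S where "S = (\<Sum>i\<in>UNIV. v $ i * (?C *v u) $ i)"
  define S' where "S' = (\<Sum>i\<in>UNIV. v' $ i * (?C *v u') $ i)"
  have telescope: "S + S' = of_real w1 * (a $ 3 - a $ 0)"
    unfolding S_def S'_def sum_UNIV_4 D4_commutator_mult_vec u_def v_def u'_def v'_def c_def
    using assms by (simp add: algebra_simps power2_eq_square)
  have "w1 * cmod (a $ 3 - a $ 0) \<le> cmod S + cmod S'"
    using norm_triangle_ineq[of S S'] assms by (simp add: telescope norm_mult)
  also have "\<dots> \<le> norm v * norm u + norm v' * norm u'"
    unfolding S_def S'_def by (intro add_mono cmod_pairing_mult_vec_le lip)
  also have "\<dots> = w1 * (w1 + w3)"
  proof -
    have "c \<ge> 0" using assms(4) by (simp add: c_def)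
    then have "norm v' = c"
      unfolding norm_vec4 v'_def by simp
    then show ?thesis
      unfolding norm_vec4 u_def v_def u'_def c_def by (simp add: power2_eq_square algebra_simps)
  qed
  finally show ?thesis using assms by simp
qed

lemma tridiagonal_sum_squares_le:
  fixes p q r x0 x1 x2 x3 :: real
  assumes "p\<^sup>2 \<le> 1" "r\<^sup>2 \<le> 1" "q\<^sup>2 \<le> (1 - p\<^sup>2) * (1 - r\<^sup>2)"
  shows "(p * x1)\<^sup>2 + (q * x2 - p * x0)\<^sup>2 + (r * x3 - q * x1)\<^sup>2 + (r * x2)\<^sup>2
           \<le> x0\<^sup>2 + x1\<^sup>2 + x2\<^sup>2 + x3\<^sup>2"
proof -
  \<comment> \<open>The difference of the two sides is this form in (x0, x2) plus the same form in (x3, x1).\<close>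
  have "0 \<le> (1 - p\<^sup>2) * y\<^sup>2 + (1 - r\<^sup>2 - q\<^sup>2) * z\<^sup>2 + 2 * p * q * y * z"
    if "p\<^sup>2 \<le> 1" "r\<^sup>2 \<le> 1" "q\<^sup>2 \<le> (1 - p\<^sup>2) * (1 - r\<^sup>2)" for p q r y z :: real
  proof (cases "p\<^sup>2 = 1")
    case True
    then show ?thesis using that by simp
  next
    case False
    then have pos: "0 < 1 - p\<^sup>2" using that by simp
    have "(1 - p\<^sup>2) * ((1 - p\<^sup>2) * y\<^sup>2 + (1 - r\<^sup>2 - q\<^sup>2) * z\<^sup>2 + 2 * p * q * y * z)
        = ((1 - p\<^sup>2) * y + p * q * z)\<^sup>2 + ((1 - p\<^sup>2) * (1 - r\<^sup>2) - q\<^sup>2) * z\<^sup>2"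
      by (simp add: power2_eq_square algebra_simps)
    also have "\<dots> \<ge> 0"
      using that by simp
    finally show ?thesis using pos by (metis mult_zero_right mult_le_cancel_left_pos)
  qed
  from this[of p r q x0 x2] this[of r p q x3 x1] assms show ?thesis
    by (simp add: power2_eq_square algebra_simps)
qed

lemma connes_lipschitz_D4_of_increments:
  fixes a :: "complex ^ 4" and w1 w2 w3 p q r :: real
  assumes "w1 > 0" "w2 > 0" "w3 > 0"
    and pqr: "p\<^sup>2 \<le> 1" "r\<^sup>2 \<le> 1" "q\<^sup>2 \<le> (1 - p\<^sup>2) * (1 - r\<^sup>2)"
    and "a $ 1 - a $ 0 = of_real (w1 * p)" "a $ 2 - a $ 1 = of_real (w2 * q)"
      "a $ 3 - a $ 2 = of_real (w3 * r)"
  shows "connes_lipschitz (D4 w1 w2 w3) a"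
  unfolding op_norm_def
proof (rule onorm_le)
  fix u :: "complex ^ 4"
  let ?Cu = "commutator (D4 w1 w2 w3) (diag_mat a) *v u"
  have Cu: "?Cu $ 0 = of_real p * u $ 1" "?Cu $ 1 = of_real q * u $ 2 - of_real p * u $ 0"
    "?Cu $ 2 = of_real r * u $ 3 - of_real q * u $ 1" "?Cu $ 3 = - of_real r * u $ 2"
    unfolding D4_commutator_mult_vec assms(7-9) mult.assoc[symmetric] of_real_mult[symmetric]
    using assms(1-3) by simp_all
  let ?x = "\<lambda>i. Re (u $ i)" and ?y = "\<lambda>i. Im (u $ i)"
  have "norm ?Cu ^ 2
      = ((p * ?x 1)\<^sup>2 + (q * ?x 2 - p * ?x 0)\<^sup>2 + (r * ?x 3 - q * ?x 1)\<^sup>2 + (r * ?x 2)\<^sup>2)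
      + ((p * ?y 1)\<^sup>2 + (q * ?y 2 - p * ?y 0)\<^sup>2 + (r * ?y 3 - q * ?y 1)\<^sup>2 + (r * ?y 2)\<^sup>2)"
    unfolding norm_vec4_power2 Cu cmod_power2 by (simp add: power2_eq_square algebra_simps)
  also have "\<dots> \<le> ((?x 0)\<^sup>2 + (?x 1)\<^sup>2 + (?x 2)\<^sup>2 + (?x 3)\<^sup>2)
      + ((?y 0)\<^sup>2 + (?y 1)\<^sup>2 + (?y 2)\<^sup>2 + (?y 3)\<^sup>2)"
    by (intro add_mono tridiagonal_sum_squares_le pqr)
  also have "\<dots> = norm u ^ 2"
    unfolding norm_vec4_power2 cmod_power2 by simp
  finally have "norm ?Cu \<le> norm u"
    by (rule power2_le_imp_le) simp
  then show "norm ?Cu \<le> 1 * norm u"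
    by simp
qed

lemma connes_dist_D4_eqI:
  fixes w1 w2 w3 p q r L :: real
  assumes w: "w1 > 0" "w2 > 0" "w3 > 0"
    and pqr: "p\<^sup>2 \<le> 1" "r\<^sup>2 \<le> 1" "q\<^sup>2 \<le> (1 - p\<^sup>2) * (1 - r\<^sup>2)"
    and L: "w1 * p + w2 * q + w3 * r = L"
    and bound: "\<And>a. connes_lipschitz (D4 w1 w2 w3) a \<Longrightarrow> cmod (a $ 3 - a $ 0) \<le> L"
  shows "connes_dist (D4 w1 w2 w3) 0 3 = L"
proof (rule connes_dist_eqI)
  define b :: "complex ^ 4"
    where "b = vec4 0 (of_real (w1 * p)) (of_real (w1 * p + w2 * q)) (of_real L)"
  show lip: "connes_lipschitz (D4 w1 w2 w3) b"
    by (rule connes_lipschitz_D4_of_increments[OF w pqr]) (simp_all add: b_def flip: L)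
  have "cmod (b $ 0 - b $ 3) = \<bar>L\<bar>"
    by (simp add: b_def)
  moreover have "\<bar>L\<bar> \<le> L"
    using bound[OF lip] by (simp add: b_def)
  ultimately show "cmod (b $ 0 - b $ 3) = L"
    by simp
qed (use bound in \<open>simp add: norm_minus_commute\<close>)

lemma D4_optimal_increments:
  fixes w1 w2 w3 :: real
  assumes w: "w1 > 0" "w2 > 0" "w3 > 0" and "w1 * w3 \<le> w2\<^sup>2"
  defines "A \<equiv> sqrt (w1\<^sup>2 + w2\<^sup>2)" and "B \<equiv> sqrt (w3\<^sup>2 + w2\<^sup>2)"
  defines "p \<equiv> w1 * B / (w2 * A)" and "r \<equiv> w3 * A / (w2 * B)"
    and "q \<equiv> (w2 ^ 4 - w1\<^sup>2 * w3\<^sup>2) / (w2\<^sup>2 * A * B)"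
  shows "p\<^sup>2 \<le> 1" "r\<^sup>2 \<le> 1" "q\<^sup>2 \<le> (1 - p\<^sup>2) * (1 - r\<^sup>2)"
    "w1 * p + w2 * q + w3 * r = A * B / w2"
proof -
  define K where "K = w2 ^ 4 - w1\<^sup>2 * w3\<^sup>2"
  have AB: "A > 0" "B > 0" "A\<^sup>2 = w1\<^sup>2 + w2\<^sup>2" "B\<^sup>2 = w3\<^sup>2 + w2\<^sup>2"
    unfolding A_def B_def using w by (auto simp: add_pos_pos)
  have "(w1 * w3)\<^sup>2 \<le> (w2\<^sup>2)\<^sup>2"
    using assms(4) w by (intro power_mono) auto
  then have K: "0 \<le> K"
    unfolding K_def by (simp add: power_mult_distrib flip: power_mult)
  have "1 - p\<^sup>2 = (w2\<^sup>2 * A\<^sup>2 - w1\<^sup>2 * B\<^sup>2) / (w2\<^sup>2 * A\<^sup>2)"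
    unfolding p_def using w AB(1) by (simp add: diff_divide_distrib power_divide power_mult_distrib)
  also have "w2\<^sup>2 * A\<^sup>2 - w1\<^sup>2 * B\<^sup>2 = K"
    unfolding AB K_def by (simp add: algebra_simps power2_eq_square power4_eq_xxxx)
  finally have p: "1 - p\<^sup>2 = K / (w2\<^sup>2 * A\<^sup>2)" .
  have "1 - r\<^sup>2 = (w2\<^sup>2 * B\<^sup>2 - w3\<^sup>2 * A\<^sup>2) / (w2\<^sup>2 * B\<^sup>2)"
    unfolding r_def using w AB(2) by (simp add: diff_divide_distrib power_divide power_mult_distrib)
  also have "w2\<^sup>2 * B\<^sup>2 - w3\<^sup>2 * A\<^sup>2 = K"
    unfolding AB K_def by (simp add: algebra_simps power2_eq_square power4_eq_xxxx)
  finally have r: "1 - r\<^sup>2 = K / (w2\<^sup>2 * B\<^sup>2)" .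
  have "0 \<le> 1 - p\<^sup>2" "0 \<le> 1 - r\<^sup>2"
    unfolding p r using K by simp_all
  then show "p\<^sup>2 \<le> 1" "r\<^sup>2 \<le> 1"
    by simp_all
  have "q\<^sup>2 = (1 - p\<^sup>2) * (1 - r\<^sup>2)"
    unfolding p r q_def K_def[symmetric] by (simp add: power2_eq_square)
  then show "q\<^sup>2 \<le> (1 - p\<^sup>2) * (1 - r\<^sup>2)"
    by simp
  have "w1 * p + w2 * q + w3 * r = (w1\<^sup>2 * B\<^sup>2 + w3\<^sup>2 * A\<^sup>2 + K) / (w2 * A * B)"
    unfolding p_def q_def r_def K_def[symmetric] using w AB(1,2) by (simp add: field_simps power2_eq_square)
  also have "w1\<^sup>2 * B\<^sup>2 + w3\<^sup>2 * A\<^sup>2 + K = A\<^sup>2 * B\<^sup>2"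
    unfolding AB K_def by (simp add: algebra_simps power2_eq_square power4_eq_xxxx)
  finally show "w1 * p + w2 * q + w3 * r = A * B / w2"
    using w AB(1,2) by (simp add: power2_eq_square)
qed

theorem mainTheorem5:
  fixes w1 w2 w3 :: real
  assumes "w1 > 0" and "w2 > 0" and "w3 > 0"
  shows "(w2 > sqrt (w1 * w3) \<longrightarrow>
            connes_dist (D4 w1 w2 w3) 0 3 =
              sqrt (w1^2 + w2^2) * sqrt (w3^2 + w2^2) / w2)
       \<and> (w2 \<le> sqrt (w1 * w3) \<longrightarrow>
            connes_dist (D4 w1 w2 w3) 0 3 = w1 + w3)"
proof (intro conjI impI)
  assume "w2 > sqrt (w1 * w3)"
  then have "w1 * w3 \<le> w2\<^sup>2"
    by (simp add: sqrt_le_D)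
  from D4_optimal_increments[OF assms this]
  show "connes_dist (D4 w1 w2 w3) 0 3 = sqrt (w1^2 + w2^2) * sqrt (w3^2 + w2^2) / w2"
    by (rule connes_dist_D4_eqI[OF assms]) (rule connes_lipschitz_D4_cmod_le_sqrt[OF assms])
next
  assume "w2 \<le> sqrt (w1 * w3)"
  then have "w2\<^sup>2 \<le> (sqrt (w1 * w3))\<^sup>2"
    using assms by (intro power_mono) auto
  then have "w2\<^sup>2 \<le> w1 * w3"
    using assms by simp
  show "connes_dist (D4 w1 w2 w3) 0 3 = w1 + w3"
    by (rule connes_dist_D4_eqI[OF assms, of 1 1 0])
      (auto intro: connes_lipschitz_D4_cmod_le_add[OF assms \<open>w2\<^sup>2 \<le> w1 * w3\<close>])
qed

end
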